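(* Let $k\ge 1$ and let $m,N$ be integers with $N\ge 3$, $m\ge 1$, $\gcd(m,N)=1$, such that $e^{2\pi i m/N}$ is a root of $Q_{k-1}(q)$. Then $\gcd(N,4k+1)\in\{1,3\}$. In particular, if $k\not\equiv 2\pmod 3$, then $\gcd(N,4k+1)=1$.
   Context: $Q_{k-1}(q)=q^{4k+4}-q^{4k+3}-q^{4k+2}-q^{4k+1}+q^3+q^2+q-1=(q^4-1)P_{k-1}(q)$, where $P_{k-1}(q)=1+\sum_{l=1}^{k} q^{4l-4}(q^4-q^3-q^2-q)$. *)

theory Defs
  imports "HOL-Analysis.Analysis"
begin

definition Qpoly :: "nat \<Rightarrow> complex \<Rightarrow> complex" where
  "Qpoly k q = q^(4*k+4) - q^(4*k+3) - q^(4*k+2) - q^(4*k+1) + q^3 + q^2 + q - 1"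

end

theory Submission
  imports Defs "HOL-Computational_Algebra.Polynomial" "HOL-Computational_Algebra.Primes"
begin

(*
  Write n = 4k+1.  Then Q_{k-1}(q) = q^n (q^3 - q^2 - q - 1) + (q^3 + q^2 + q - 1), so for a
  fixed value X = z^n every root w of Q_{k-1} with w^n = X is a root of the cubic
  X (w^3 - w^2 - w - 1) + (w^3 + w^2 + w - 1).

  Let z be a primitive N-th root of unity with Q_{k-1}(z) = 0 and let d divide both N and n,
  N = d M.  The Galois conjugates z^(1+jM), j < d, with 1+jM coprime to N are pairwise distinct,
  are again roots of Q_{k-1} and all have the same n-th power z^n; hence there are at most three
  of them.  For d a prime p >= 5 and for d = 9 one finds at least four such j, so gcd(N,n) has
  no prime factor other than 3 (it is odd) and is not divisible by 9.

  The only non-elementary ingredient is that integer polynomials vanishing at z vanish at all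
  z^a with a coprime to N (irreducibility of cyclotomic polynomials).
*)

section \<open>Frobenius congruences\<close>

lemma add_power_prime:
  fixes a b :: "'a::comm_ring_1"
  assumes p: "prime p"
  shows "\<exists>c. (a + b)^p = a^p + b^p + of_nat p * c"
proof -
  have p1: "p > 1" using p prime_gt_1_nat by blast
  have middle: "(of_nat (p choose i) :: 'a) = of_nat p * of_nat ((p choose i) div p)"
    if "i \<in> {1..<p}" for i
  proof -
    have "p dvd (p choose i)" using that p by (intro dvd_choose_prime) auto
    then show ?thesis by (metis dvd_mult_div_cancel of_nat_mult)
  qed
  have "(a + b)^p = (\<Sum>i\<le>p. of_nat (p choose i) * a^i * b^(p-i))"
    by (rule binomial_ring)
  also have "{..p} = insert p (insert 0 {1..<p})" using p1 by auto
  also have "(\<Sum>i\<in>insert p (insert 0 {1..<p}). of_nat (p choose i) * a^i * b^(p-i))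
      = a^p + b^p + (\<Sum>i\<in>{1..<p}. of_nat (p choose i) * a^i * b^(p-i))"
    using p1 by simp
  also have "(\<Sum>i\<in>{1..<p}. of_nat (p choose i) * a^i * b^(p-i))
      = of_nat p * (\<Sum>i\<in>{1..<p}. of_nat ((p choose i) div p) * a^i * b^(p-i))"
    using middle by (simp add: sum_distrib_left mult.assoc)
  finally show ?thesis by blast
qed

lemma int_power_prime:
  fixes c :: int
  assumes p: "prime p"
  shows "\<exists>t. c^p = c + int p * t"
proof -
  have nonneg: "\<exists>t. (int n)^p = int n + int p * t" for n
  proof (induction n)
    case 0
    then show ?case using p by (intro exI[of _ 0]) (simp add: prime_gt_0_nat)
  next
    case (Suc n)
    then obtain t where t: "(int n)^p = int n + int p * t" by blast
    obtain e where e: "(int n + 1)^p = (int n)^p + 1^p + of_nat p * e"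
      using add_power_prime[OF p] by blast
    show ?case using t e by (intro exI[of _ "t + e"]) (simp add: algebra_simps)
  qed
  show ?thesis
  proof (cases "c \<ge> 0")
    case True
    then show ?thesis using nonneg[of "nat c"] by simp
  next
    case False
    obtain t where t: "(-c)^p = -c + int p * t"
      using nonneg[of "nat (-c)"] False by auto
    obtain e where e: "(-c + c)^p = (-c)^p + c^p + of_nat p * e"
      using add_power_prime[OF p] by blast
    then have "0 = (-c)^p + c^p + int p * e" using p by (simp add: prime_gt_0_nat zero_power)
    then show ?thesis using t by (intro exI[of _ "- t - e"]) (simp add: algebra_simps)
  qed
qed

lemma const_poly_power: "[:c:]^n = [:(c::'a::comm_ring_1)^n:]"
  by (induction n) (auto simp: poly_eq_iff coeff_pCons split: nat.split)

lemma int_poly_power_prime: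
  fixes h :: "int poly"
  assumes p: "prime p"
  shows "\<exists>r. h^p = pcompose h (monom 1 p) + smult (int p) r"
proof (induction h)
  case 0
  then show ?case using p by (intro exI[of _ 0]) (simp add: prime_gt_0_nat)
next
  case (pCons c h)
  then obtain r where r: "h^p = pcompose h (monom 1 p) + smult (int p) r" by blast
  obtain t where t: "c^p = c + int p * t" using int_power_prime[OF p] by blast
  have pCons_eq: "pCons c h = [:c:] + [:0,1:] * h"
    by (simp add: poly_eq_iff coeff_pCons split: nat.split)
  obtain e where e: "([:c:] + [:0,1:] * h)^p = [:c:]^p + ([:0,1:] * h)^p + of_nat p * e"
    using add_power_prime[OF p] by blast
  have x: "[:0,1:]^p = (monom 1 p :: int poly)" by (simp add: monom_altdef)
  have "(pCons c h)^p
      = [:c:] + smult (int p) [:t:] + monom 1 p * (pcompose h (monom 1 p) + smult (int p) r)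
        + smult (int p) e"
    unfolding pCons_eq e power_mult_distrib x r[symmetric]
    by (simp add: t of_nat_poly const_poly_power smult_add_right)
  also have "\<dots> = pcompose (pCons c h) (monom 1 p) + smult (int p) ([:t:] + monom 1 p * r + e)"
    by (simp add: pcompose_pCons algebra_simps smult_add_right)
  finally show ?case by blast
qed

abbreviation ipoly :: "int poly \<Rightarrow> complex \<Rightarrow> complex" where
  "ipoly p z \<equiv> poly (map_poly of_int p) z"

lemma map_poly_of_int_smult [simp]:
  "(map_poly of_int (smult c p) :: complex poly) = smult (of_int c) (map_poly of_int p)"
  by (simp add: smult_conv_map_poly map_poly_map_poly o_def)

lemma map_poly_of_int_add [simp]:
  "(map_poly of_int (p + q) :: complex poly) = map_poly of_int p + map_poly of_int q"
  by (intro poly_eqI) (simp_all add: coeff_map_poly)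

lemma map_poly_of_int_diff [simp]:
  "(map_poly of_int (p - q) :: complex poly) = map_poly of_int p - map_poly of_int q"
  by (intro poly_eqI) (simp_all add: coeff_map_poly)

lemma map_poly_of_int_mult [simp]:
  "(map_poly of_int (p * q) :: complex poly) = map_poly of_int p * map_poly of_int q"
  by (intro poly_eqI) (simp_all add: coeff_map_poly coeff_mult)

lemma map_poly_of_int_power [simp]:
  "(map_poly of_int (p ^ n) :: complex poly) = map_poly of_int p ^ n"
  by (induction n) simp_all

lemma map_poly_of_int_monom [simp]:
  "(map_poly of_int (monom c n) :: complex poly) = monom (of_int c) n"
  by (simp add: map_poly_monom)

lemma map_poly_of_int_pcompose [simp]:
  "(map_poly of_int (pcompose p q) :: complex poly)
     = pcompose (map_poly of_int p) (map_poly of_int q)"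
  by (induction p) (simp_all add: pcompose_pCons map_poly_pCons)

section \<open>Minimal integer polynomials\<close>

definition is_int_minpoly :: "complex \<Rightarrow> int poly \<Rightarrow> bool" where
  "is_int_minpoly z g \<longleftrightarrow> g \<noteq> 0 \<and> content g = 1 \<and> ipoly g z = 0
     \<and> (\<forall>F. ipoly F z = 0 \<longrightarrow> g dvd F)"

lemma primitive_dvd_smult:
  fixes g F q :: "int poly"
  assumes c: "content g = 1" and a: "a \<noteq> 0" and eq: "smult a F = g * q"
  shows "g dvd F"
proof -
  have "content (smult a F) = content (g * q)" using eq by simp
  then have cq: "content q = \<bar>a\<bar> * content F" using c by (simp add: content_mult)
  have "smult a F = smult (\<bar>a\<bar> * content F) (g * primitive_part q)"
    using eq cq by (metis content_times_primitive_part mult_smult_right)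
  then have "smult a F = smult a (smult (sgn a * content F) (g * primitive_part q))"
    using a by (simp add: abs_sgn[of a] mult.assoc sgn_mult_abs)
  then have "F = smult (sgn a * content F) (g * primitive_part q)"
    using a by (auto simp: poly_eq_iff)
  then show ?thesis by (metis dvd_triv_left mult_smult_right)
qed

text \<open>Every algebraic number has a minimal integer polynomial: the primitive part of a
  nonzero integer polynomial of least degree vanishing at it (pseudo-division).\<close>
lemma int_minpoly_exists:
  assumes "p \<noteq> 0" and "ipoly p z = 0"
  shows "\<exists>g. is_int_minpoly z g"
proof -
  define P where "P = (\<lambda>d. \<exists>p. p \<noteq> 0 \<and> ipoly p z = 0 \<and> degree p = d)"
  have "\<exists>d. P d" using assms unfolding P_def by blast
  then have "P (LEAST d. P d)" by (rule LeastI_ex)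
  then obtain g0 where g0: "g0 \<noteq> 0" "ipoly g0 z = 0" "degree g0 = (LEAST d. P d)"
    unfolding P_def by blast
  have least: "degree g0 \<le> degree p" if "p \<noteq> 0" "ipoly p z = 0" for p
    unfolding g0(3) by (rule Least_le) (use that in \<open>auto simp: P_def\<close>)
  define g where "g = primitive_part g0"
  have g: "g \<noteq> 0" "content g = 1" "degree g = degree g0"
    using g0 by (simp_all add: g_def)
  have "ipoly g0 z = of_int (content g0) * ipoly g z"
    by (metis content_times_primitive_part g_def map_poly_of_int_smult poly_smult)
  then have gz: "ipoly g z = 0" using g0 by simp
  have "g dvd F" if F: "ipoly F z = 0" for F
  proof -
    obtain a q where aq: "a \<noteq> 0" "smult a F = g * q + pseudo_mod F g"
      using pseudo_mod(1)[OF g(1), of F] by blast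
    have "ipoly (pseudo_mod F g) z = 0"
      using arg_cong[OF aq(2), of "\<lambda>p. ipoly p z"] F gz by simp
    then have "pseudo_mod F g = 0"
      using pseudo_mod(2)[OF g(1), of F] least g(3) by fastforce
    then show ?thesis using primitive_dvd_smult[OF g(2) aq(1)] aq(2) by simp
  qed
  then show ?thesis using g gz unfolding is_int_minpoly_def by blast
qed

lemma int_minpoly_nonconstant:
  assumes "is_int_minpoly z g"
  shows "degree g \<ge> 1"
proof (rule ccontr)
  assume "\<not> 1 \<le> degree g"
  then have "degree g = 0" by simp
  then obtain c where "g = [:c:]" by (rule degree_eq_zeroE)
  then show False using assms by (auto simp: is_int_minpoly_def map_poly_pCons)
qed

section \<open>The ideal (g, l) in \<int>[x]\<close>

definition in_ideal :: "int poly \<Rightarrow> int \<Rightarrow> int poly \<Rightarrow> bool" where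
  "in_ideal g l P \<longleftrightarrow> (\<exists>A B. P = g * A + smult l B)"

lemma in_ideal_add: "in_ideal g l P \<Longrightarrow> in_ideal g l Q \<Longrightarrow> in_ideal g l (P + Q)"
proof -
  assume "in_ideal g l P" "in_ideal g l Q"
  then obtain A B A' B' where "P = g * A + smult l B" "Q = g * A' + smult l B'"
    unfolding in_ideal_def by blast
  then have "P + Q = g * (A + A') + smult l (B + B')" by (simp add: algebra_simps smult_add_right)
  then show ?thesis unfolding in_ideal_def by blast
qed

lemma in_ideal_diff: "in_ideal g l P \<Longrightarrow> in_ideal g l Q \<Longrightarrow> in_ideal g l (P - Q)"
proof -
  assume "in_ideal g l P" "in_ideal g l Q"
  then obtain A B A' B' where "P = g * A + smult l B" "Q = g * A' + smult l B'"
    unfolding in_ideal_def by blast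
  then have "P - Q = g * (A - A') + smult l (B - B')" by (simp add: algebra_simps smult_diff_right)
  then show ?thesis unfolding in_ideal_def by blast
qed

lemma in_ideal_mult: "in_ideal g l P \<Longrightarrow> in_ideal g l (Q * P)"
proof -
  assume "in_ideal g l P"
  then obtain A B where "P = g * A + smult l B" unfolding in_ideal_def by blast
  then have "Q * P = g * (Q * A) + smult l (Q * B)" by (simp add: algebra_simps)
  then show ?thesis unfolding in_ideal_def by blast
qed

lemma in_ideal_generator: "in_ideal g l (g * A)"
  unfolding in_ideal_def by (rule exI[of _ A], rule exI[of _ 0]) simp

lemma in_ideal_smult: "in_ideal g l (smult l B)"
  unfolding in_ideal_def by (rule exI[of _ 0], rule exI[of _ B]) simp

lemma in_ideal_power_diff: "in_ideal g l (P - Q) \<Longrightarrow> in_ideal g l (P^n - Q^n)"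
proof (induction n)
  case 0
  then show ?case using in_ideal_generator[of g l 0] by simp
next
  case (Suc n)
  have "P^Suc n - Q^Suc n = P * (P^n - Q^n) + Q^n * (P - Q)" by (simp add: algebra_simps)
  then show ?case using Suc in_ideal_add in_ideal_mult by metis
qed

text \<open>If the leading coefficient of g is a unit mod l, then g A \<equiv> 0 mod l in all degrees
  \<ge> deg g forces A \<equiv> 0 mod l: look at the top coefficient of A that is nonzero mod l.\<close>
lemma prime_dvd_cofactor:
  fixes g A :: "int poly"
  assumes l: "prime l" and lc: "\<not> l dvd lead_coeff g"
    and high: "\<And>i. i \<ge> degree g \<Longrightarrow> l dvd coeff (g * A) i"
  shows "l dvd coeff A i"
proof (rule ccontr)
  assume i: "\<not> l dvd coeff A i"
  define S where "S = {i. \<not> l dvd coeff A i}"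
  have "S \<subseteq> {..degree A}" by (auto simp: S_def intro: le_degree)
  then have fin: "finite S" by (rule finite_subset) simp
  define j where "j = Max S"
  have "j \<in> S" unfolding j_def using fin i by (intro Max_in) (auto simp: S_def)
  then have j: "\<not> l dvd coeff A j" by (simp add: S_def)
  have above: "l dvd coeff A i" if "i > j" for i
  proof (rule ccontr)
    assume "\<not> l dvd coeff A i"
    then have "i \<le> j" unfolding j_def using fin by (intro Max_ge) (auto simp: S_def)
    then show False using that by simp
  qed
  define d where "d = degree g"
  define rest where "rest = (\<Sum>i\<in>{..d+j}-{d}. coeff g i * coeff A (d+j-i))"
  have "coeff (g * A) (d + j) = (\<Sum>i\<le>d+j. coeff g i * coeff A (d+j-i))"
    by (simp add: coeff_mult)
  also have "\<dots> = coeff g d * coeff A j + rest"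
    unfolding rest_def by (subst sum.remove[of _ d]) auto
  finally have top: "coeff g d * coeff A j = coeff (g * A) (d + j) - rest" by simp
  have "l dvd rest" unfolding rest_def
  proof (rule dvd_sum)
    fix i assume i: "i \<in> {..d+j}-{d}"
    show "l dvd coeff g i * coeff A (d+j-i)"
    proof (cases "i < d")
      case True
      then show ?thesis using above by simp
    next
      case False
      then have "coeff g i = 0" using i by (auto simp: d_def coeff_eq_0)
      then show ?thesis by simp
    qed
  qed
  moreover have "l dvd coeff (g * A) (d + j)" using high d_def by simp
  ultimately have "l dvd coeff g d * coeff A j" unfolding top by (rule dvd_diff[rotated])
  then show False using l j lc d_def by (simp add: prime_dvd_mult_iff)
qed

lemma const_in_ideal_dvd:
  assumes I: "in_ideal g l [:c:]" and dg: "degree g \<ge> 1" and lc: "\<not> l dvd lead_coeff g"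
    and l: "prime l"
  shows "l dvd c"
proof -
  obtain A B where AB: "[:c:] = g * A + smult l B" using I unfolding in_ideal_def by blast
  have high: "coeff (g * A) i = - l * coeff B i" if "i \<ge> degree g" for i
  proof -
    have "coeff [:c:] i = 0" using that dg by (cases i) auto
    then show ?thesis using arg_cong[OF AB, of "\<lambda>p. coeff p i"] by simp
  qed
  have "l dvd coeff A 0" using prime_dvd_cofactor[OF l lc, of A 0] high by simp
  moreover have "c = coeff g 0 * coeff A 0 + l * coeff B 0"
    using arg_cong[OF AB, of "\<lambda>p. coeff p 0"] by (simp add: coeff_mult)
  ultimately show ?thesis by simp
qed

text \<open>Squarefreeness of x^N - 1 modulo l, in ideal form: if x^N - 1 = g h w and h^l lies in
  (g, l), then so does N^l.  (Differentiate: N x^(N-1) \<equiv> h w g' mod g.)\<close>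
lemma unit_root_factor_ideal:
  fixes g h w :: "int poly"
  assumes N: "N > 0" and X: "monom 1 N - 1 = g * (h * w)" and hl: "in_ideal g l (h^l)"
  shows "in_ideal g l [:int N ^ l:]"
proof -
  define Y :: "int poly" where "Y = monom (int N) (N - 1)"
  define D where "D = w * pderiv g"
  have "Y = pderiv (monom 1 N - 1)" by (simp add: Y_def pderiv_diff pderiv_monom)
  also have "\<dots> = g * (h * pderiv w + w * pderiv h) + h * D"
    unfolding X D_def by (simp add: pderiv_mult algebra_simps)
  finally have "in_ideal g l (Y - h * D)" by (simp add: in_ideal_generator)
  then have "in_ideal g l (Y^l - (h * D)^l)" by (rule in_ideal_power_diff)
  moreover have "in_ideal g l ((h * D)^l)"
    using in_ideal_mult[OF hl, of "D^l"] by (simp add: power_mult_distrib mult.commute)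
  ultimately have Yl: "in_ideal g l (Y^l)" using in_ideal_add by fastforce
  have "in_ideal g l ((monom 1 N)^l - 1^l)"
    by (rule in_ideal_power_diff) (simp add: X in_ideal_generator)
  then have Xl: "in_ideal g l (monom 1 (N * l) - 1)" by (simp add: monom_power)
  have "monom 1 l * Y^l = monom (int N ^ l) (N * l)"
    using N by (simp add: Y_def monom_power mult_monom algebra_simps)
  then have "[:int N ^ l:] = monom 1 l * Y^l - [:int N ^ l:] * (monom 1 (N * l) - 1)"
    by (simp add: algebra_simps smult_monom monom_0)
  then show ?thesis using Yl Xl by (metis in_ideal_diff in_ideal_mult)
qed

section \<open>Galois conjugates of roots of unity\<close>

text \<open>If z^N = 1 and the prime l does not divide N, then z^l is a root of the minimal
  integer polynomial g of z.  Otherwise the minimal polynomial h of z^l is a different factor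
  of x^N - 1, and h(x)^l \<equiv> h(x^l) \<equiv> 0 mod (g, l) contradicts squarefreeness mod l.\<close>
lemma int_minpoly_root_power_prime:
  assumes N: "N > 0" "z^N = 1" and l: "prime l" "\<not> l dvd N" and g: "is_int_minpoly z g"
  shows "ipoly g (z^l) = 0"
proof (rule ccontr)
  assume ng: "ipoly g (z^l) \<noteq> 0"
  define X :: "int poly" where "X = monom 1 N - 1"
  have Xz: "ipoly X w = w^N - 1" for w by (simp add: X_def poly_monom)
  have X0: "X \<noteq> 0" using Xz[of 0] N by (auto simp: power_0_left)
  have "(z^l)^N = (z^N)^l" by (simp only: power_mult[symmetric] mult.commute)
  then have zlN: "ipoly X (z^l) = 0" using N Xz by simp
  obtain h where h: "is_int_minpoly (z^l) h" using int_minpoly_exists[OF X0 zlN] by blast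
  have dvd_g: "g dvd F" if "ipoly F z = 0" for F
    using g that unfolding is_int_minpoly_def by blast
  have dvd_h: "h dvd F" if "ipoly F (z^l) = 0" for F
    using h that unfolding is_int_minpoly_def by blast
  have dg: "degree g \<ge> 1" by (rule int_minpoly_nonconstant[OF g])
  have hz: "ipoly h z \<noteq> 0"
  proof
    assume "ipoly h z = 0"
    then obtain t where t: "h = g * t" using dvd_g by blast
    then have "ipoly t (z^l) = 0" using h ng by (simp add: is_int_minpoly_def)
    then have "h dvd t" by (rule dvd_h)
    moreover have "t \<noteq> 0" "g \<noteq> 0" using t h g by (auto simp: is_int_minpoly_def)
    ultimately have "degree g + degree t \<le> degree t"
      using t dvd_imp_degree_le[of h t] by (simp add: degree_mult_eq)
    then show False using dg by simp
  qed
  obtain v where v: "X = h * v" using dvd_h[OF zlN] by (elim dvdE)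
  have "ipoly v z = 0" using arg_cong[OF v, of "\<lambda>p. ipoly p z"] Xz[of z] N hz by simp
  then obtain w where w: "v = g * w" using dvd_g by blast
  have "ipoly (pcompose h (monom 1 l)) z = 0"
    using h by (simp add: is_int_minpoly_def poly_pcompose poly_monom)
  then obtain s where s: "pcompose h (monom 1 l) = g * s" using dvd_g by blast
  obtain r where "h^l = pcompose h (monom 1 l) + smult (int l) r"
    using int_poly_power_prime[OF l(1)] by blast
  then have hl: "in_ideal g (int l) (h^l)"
    using s in_ideal_add[OF in_ideal_generator in_ideal_smult] by simp
  have "monom 1 N - 1 = g * (h * w)" using v w X_def by (simp add: mult_ac)
  from unit_root_factor_ideal[OF N(1) this hl] have ideal: "in_ideal g (int l) [:int N ^ l:]" .
  have lc: "\<not> int l dvd lead_coeff g"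
  proof
    assume l_dvd: "int l dvd lead_coeff g"
    have "ipoly X z = 0" using Xz N by simp
    then obtain u where "X = g * u" using dvd_g by blast
    then have "int l dvd lead_coeff X" using l_dvd by (simp add: lead_coeff_mult)
    moreover have "lead_coeff X = 1"
    proof -
      have "X = -1 + monom 1 N" by (simp add: X_def)
      moreover have "degree (-1 :: int poly) < degree (monom (1::int) N)"
        using N by (simp add: degree_monom_eq)
      ultimately have "lead_coeff X = lead_coeff (monom (1::int) N)" by (metis lead_coeff_add_le)
      then show ?thesis by (simp add: degree_monom_eq)
    qed
    ultimately show False using l by (simp add: prime_gt_1_nat)
  qed
  have "int l dvd int N ^ l"
    using const_in_ideal_dvd[OF ideal dg lc] l(1) by simp
  moreover have "prime (int l)" using l(1) by simp
  ultimately have "int l dvd int N" by (rule prime_dvd_power[rotated])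
  then show False using l by simp
qed

lemma root_power_prime:
  assumes N: "N > 0" "z^N = 1" and l: "prime l" "\<not> l dvd N" and F: "ipoly F z = 0"
  shows "ipoly F (z^l) = 0"
proof -
  define X :: "int poly" where "X = monom 1 N - 1"
  have "ipoly X 0 = -1" "ipoly X z = 0" using N by (simp_all add: X_def poly_monom)
  then obtain g where g: "is_int_minpoly z g" using int_minpoly_exists[of X z] by force
  then obtain t where "F = g * t" using F by (auto simp: is_int_minpoly_def)
  then show ?thesis using int_minpoly_root_power_prime[OF N l g] by simp
qed

lemma root_power_coprime:
  assumes N: "N > 0" "z^N = 1" and F: "ipoly F z = 0"
  shows "a > 0 \<Longrightarrow> coprime a N \<Longrightarrow> ipoly F (z^a) = 0"
proof (induction a rule: less_induct)
  case (less a)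
  show ?case
  proof (cases "a = 1")
    case True
    then show ?thesis using F by simp
  next
    case False
    obtain l where l: "prime l" "l dvd a" using prime_factor_nat False by blast
    then obtain b where b: "a = l * b" by (elim dvdE)
    have "b > 0" "coprime b N" "coprime l N" using less.prems b by auto
    moreover have "b < a" using b \<open>b > 0\<close> l prime_gt_1_nat by simp
    ultimately have Fb: "ipoly F (z^b) = 0" using less.IH by blast
    have "\<not> l dvd N" using \<open>coprime l N\<close> l(1) by (meson coprime_common_divisor not_prime_unit dvd_refl)
    moreover have "(z^b)^N = 1" using N by (metis power_mult power_mult_distrib power_one mult.commute)
    ultimately have "ipoly F ((z^b)^l) = 0" using root_power_prime N(1) l(1) Fb by blast
    then show ?thesis using b by (simp add: power_mult mult.commute)
  qed
qed

section \<open>The polynomial Q and its reduction to a cubic\<close>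

text \<open>Q_n(x) = x^(n+3) - x^(n+2) - x^(n+1) - x^n + x^3 + x^2 + x - 1, so that
  Q_{k-1} of the paper is Q_(4k+1).\<close>
definition Qint :: "nat \<Rightarrow> int poly" where
  "Qint n = monom 1 (n+3) - monom 1 (n+2) - monom 1 (n+1) - monom 1 n
     + monom 1 3 + monom 1 2 + monom 1 1 - 1"

lemma ipoly_Qint: "ipoly (Qint n) w = w^(n+3) - w^(n+2) - w^(n+1) - w^n + w^3 + w^2 + w - 1"
  by (simp add: Qint_def poly_monom)

lemma Qpoly_eq_Qint: "Qpoly k w = ipoly (Qint (4*k+1)) w"
proof -
  have "4*k+1+3 = 4*k+4" "4*k+1+2 = 4*k+3" "4*k+1+1 = 4*k+2" by simp_all
  then show ?thesis unfolding ipoly_Qint Qpoly_def by (simp only:)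
qed

text \<open>Roots w of Q_n sharing the same value X = w^n are roots of a fixed nonzero cubic, so
  there are at most three of them.\<close>
lemma card_Qint_roots_same_power:
  assumes "\<And>w. w \<in> W \<Longrightarrow> ipoly (Qint n) w = 0 \<and> w^n = X"
  shows "card W \<le> 3"
proof -
  define C :: "complex poly" where "C = [: -(X+1), 1-X, 1-X, X+1 :]"
  have "C \<noteq> 0"
  proof
    assume "C = 0"
    then have "coeff C 0 = 0" "coeff C 1 = 0" by simp_all
    then show False by (simp add: C_def add_eq_0_iff)
  qed
  have "poly C w = ipoly (Qint n) w" if "w^n = X" for w
    using that by (simp add: C_def ipoly_Qint power_add algebra_simps power2_eq_square power3_eq_cube)
  then have "W \<subseteq> {w. poly C w = 0}" using assms by auto
  then have "card W \<le> card {w. poly C w = 0}"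
    using poly_roots_finite[OF \<open>C \<noteq> 0\<close>] by (rule card_mono[rotated])
  also have "\<dots> \<le> degree C" using card_poly_roots_bound[OF \<open>C \<noteq> 0\<close>] .
  also have "\<dots> \<le> 3" by (simp add: C_def)
  finally show ?thesis .
qed

lemma coprime_one_plus_mult: "coprime (1 + j * M) (M::nat)"
  by (metis coprime_add_one_left coprime_commute coprime_mult_left_iff add.commute mult.commute)

text \<open>For a primitive N-th root of unity z with Q_n(z) = 0 and a common
  divisor d of N = d M and n, the conjugates z^(1+jM) (j < d, 1+jM prime to d) are distinct
  roots of Q_n with the same n-th power z^n; hence there are at most three such j.\<close>
lemma card_conjugates_le_3:
  assumes order: "\<And>t. z^t = 1 \<longleftrightarrow> N dvd t" and N: "N = d * M" "N > 0"
    and dn: "d dvd n" and Q: "ipoly (Qint n) z = 0"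
  shows "card {j \<in> {..<d}. coprime (1 + j * M) d} \<le> 3"
proof -
  define J where "J = {j \<in> {..<d}. coprime (1 + j * M) d}"
  define w where "w = (\<lambda>j::nat. z^(1 + j * M))"
  have z0: "z \<noteq> 0" using order[of N] N by (auto simp: power_0_left)
  obtain e where e: "n = d * e" using dn by (elim dvdE)
  have zN: "z^N = 1" using order by simp
  have roots: "ipoly (Qint n) (w j) = 0 \<and> (w j)^n = z^n" if "j \<in> J" for j
  proof
    have "coprime (1 + j * M) N"
      using that N coprime_one_plus_mult by (simp add: J_def)
    then show "ipoly (Qint n) (w j) = 0"
      unfolding w_def by (rule root_power_coprime[OF N(2) zN Q, rotated]) simp
    have "(w j)^n = z^((1 + j * M) * n)" unfolding w_def by (simp only: power_mult)
    also have "(1 + j * M) * n = n + N * (j * e)" using N(1) e by (simp add: algebra_simps)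
    also have "z^(n + N * (j * e)) = z^n * (z^N)^(j * e)" by (simp only: power_add power_mult)
    finally show "(w j)^n = z^n" using zN by simp
  qed
  have distinct: "w a \<noteq> w b" if "a < b" "b < d" for a b
  proof
    assume "w a = w b"
    moreover have "z^(1 + b * M) = z^(1 + a * M) * z^((b - a) * M)"
      using that by (simp add: power_add[symmetric] algebra_simps)
    ultimately have "z^((b - a) * M) = 1" using z0 by (simp add: w_def)
    then have "d * M dvd (b - a) * M" using order N by simp
    then have "d dvd b - a" using N by simp
    then show False using that by (simp add: nat_dvd_not_less)
  qed
  have "inj_on w J"
  proof (rule inj_onI)
    fix a b assume ab: "a \<in> J" "b \<in> J" "w a = w b"
    show "a = b"
    proof (rule ccontr)
      assume "a \<noteq> b"
      then consider "a < b" | "b < a" by linarith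
      then show False using ab distinct[of a b] distinct[of b a] by cases (auto simp: J_def)
    qed
  qed
  then have "card J = card (w ` J)" by (simp add: card_image)
  also have "\<dots> \<le> 3" by (rule card_Qint_roots_same_power) (use roots in auto)
  finally show ?thesis by (simp add: J_def)
qed

section \<open>Counting the admissible shifts\<close>

text \<open>For a prime p \<ge> 5, at most one j < p has p dividing 1 + jM, so at least four of the
  shifts 1 + jM (j < p) are prime to p.\<close>
lemma card_coprime_shifts_prime:
  fixes p M :: nat
  assumes p: "prime p" "p \<ge> 5"
  shows "card {j \<in> {..<p}. coprime (1 + j * M) p} \<ge> 4"
proof -
  define B where "B = {j \<in> {..<p}. p dvd 1 + j * M}"
  have unique: "a = b" if "a \<in> B" "b \<in> B" "a \<le> b" for a b
  proof (rule ccontr)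
    assume "a \<noteq> b"
    have "p dvd (1 + b * M) - (1 + a * M)" using that by (intro dvd_diff_nat) (auto simp: B_def)
    also have "(1 + b * M) - (1 + a * M) = (b - a) * M" by (simp add: diff_mult_distrib)
    finally have "p dvd b - a \<or> p dvd M" using p(1) by (simp add: prime_dvd_mult_iff)
    moreover have "\<not> p dvd b - a"
      using that \<open>a \<noteq> b\<close> by (intro nat_dvd_not_less) (auto simp: B_def)
    moreover have "\<not> p dvd M"
    proof
      assume "p dvd M"
      then have "p dvd a * M" by simp
      moreover have "p dvd 1 + a * M" using that(1) by (simp add: B_def)
      ultimately have "p dvd 1" by (metis dvd_add_left_iff)
      then show False using p(1) by simp
    qed
    ultimately show False by blast
  qed
  have fin: "finite B" "B \<subseteq> {..<p}" by (auto simp: B_def)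
  have "\<forall>a\<in>B. \<forall>b\<in>B. a = b" using unique by (metis nat_le_linear)
  then have "card B \<le> 1" using card_le_Suc0_iff_eq[OF fin(1)] by simp
  moreover have "{j \<in> {..<p}. coprime (1 + j * M) p} = {..<p} - B"
  proof -
    have "coprime x p \<longleftrightarrow> \<not> p dvd x" for x
      using p(1) prime_imp_coprime[of p x] coprime_commute by auto
    then show ?thesis by (auto simp: B_def)
  qed
  ultimately show ?thesis using p(2) card_Diff_subset[OF fin] by simp
qed

text \<open>For d = 9: depending on M mod 3, four explicit j < 9 make 1 + jM prime to 3.\<close>
lemma card_coprime_shifts_nine:
  fixes M :: nat
  shows "card {j \<in> {..<9}. coprime (1 + j * M) (9::nat)} \<ge> 4"
proof -
  define S where "S = {j \<in> {..<9}. coprime (1 + j * M) (9::nat)}"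
  have cop: "coprime x (9::nat) \<longleftrightarrow> \<not> 3 dvd x" for x
  proof -
    have "coprime x (9::nat) \<longleftrightarrow> coprime x ((3::nat)^2)" by simp
    also have "\<dots> \<longleftrightarrow> coprime x 3" by (simp only: coprime_power_right_iff) simp
    also have "\<dots> \<longleftrightarrow> \<not> 3 dvd x"
      using prime_imp_coprime[of "3::nat" x] coprime_commute by auto
    finally show ?thesis .
  qed
  have "M mod 3 = 0 \<or> M mod 3 = 1 \<or> M mod 3 = 2" by auto
  then obtain T :: "nat set" where T: "T \<subseteq> S" "card T = 4"
  proof (elim disjE)
    assume "M mod 3 = 0"
    then have "{0,1,2,3} \<subseteq> S" unfolding S_def cop by auto presburger+
    then show ?thesis using that[of "{0,1,2,3}"] by simp
  next
    assume "M mod 3 = 1"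
    then have "{0,1,3,4} \<subseteq> S" unfolding S_def cop by auto presburger+
    then show ?thesis using that[of "{0,1,3,4}"] by simp
  next
    assume "M mod 3 = 2"
    then have "{0,2,3,5} \<subseteq> S" unfolding S_def cop by auto presburger+
    then show ?thesis using that[of "{0,2,3,5}"] by simp
  qed
  have "card T \<le> card S" using T(1) by (intro card_mono) (simp_all add: S_def)
  then show ?thesis using T(2) by (simp add: S_def)
qed

lemma exp_root_of_unity_order:
  fixes m :: int and N t :: nat
  assumes N: "N > 0" and cop: "coprime m (int N)"
  shows "exp (2 * of_real pi * \<i> * of_int m / of_nat N) ^ t = 1 \<longleftrightarrow> N dvd t"
proof -
  have real_eq: "2 * pi * m * t / N = 2 * real_of_int j * pi \<longleftrightarrow> m * int t = j * int N" for j
  proof -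
    have "2 * pi * m * t / N = 2 * real_of_int j * pi
        \<longleftrightarrow> real_of_int (m * int t) = real_of_int (j * int N)"
      using N pi_gt_zero by (simp add: field_simps)
    then show ?thesis by (simp only: of_int_eq_iff)
  qed
  have "exp (2 * of_real pi * \<i> * of_int m / of_nat N) ^ t
      = exp (\<i> * complex_of_real (2 * pi * m * t / N))"
    by (simp add: exp_of_nat_mult[symmetric] field_simps)
  also have "\<dots> = 1 \<longleftrightarrow> (\<exists>j::int. m * int t = j * int N)"
    by (simp add: exp_eq_1 real_eq)
  also have "\<dots> \<longleftrightarrow> int N dvd m * int t" by (auto simp: dvd_def mult.commute)
  also have "\<dots> \<longleftrightarrow> N dvd t"
    using cop by (simp add: coprime_commute coprime_dvd_mult_right_iff)
  finally show ?thesis .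
qed

lemma only_factor_three:
  fixes G :: nat
  assumes three: "\<And>p. prime p \<Longrightarrow> p dvd G \<Longrightarrow> p = 3" and nine: "\<not> 9 dvd G"
  shows "G \<in> {1, 3}"
proof (cases "G = 1")
  case False
  then have "3 dvd G" using three prime_factor_nat by metis
  then obtain r where r: "G = 3 * r" by (elim dvdE)
  have "r = 1"
  proof (rule ccontr)
    assume "r \<noteq> 1"
    then obtain q where "prime q" "q dvd r" using prime_factor_nat by blast
    then have "3 dvd r" using three[of q] r by auto
    then show False using nine r by auto
  qed
  then show ?thesis using r by simp
qed simp

text \<open>If a primitive N-th root of unity is a root of Q_n with n odd, then gcd(N, n) is 1 or 3:
  a prime factor p \<ge> 5 or a factor 9 of the gcd would give four conjugates on one cubic.\<close>
lemma gcd_order_degree: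
  assumes order: "\<And>t. z^t = 1 \<longleftrightarrow> N dvd t" and N: "N > 0" and n: "odd n"
    and Q: "ipoly (Qint n) z = 0"
  shows "gcd N n \<in> {1, 3}"
proof (rule only_factor_three)
  have few: "card {j \<in> {..<d}. coprime (1 + j * (N div d)) d} \<le> 3" if "d dvd gcd N n" for d
    using that N by (intro card_conjugates_le_3[OF order _ _ _ Q]) auto
  show "p = 3" if p: "prime p" "p dvd gcd N n" for p
  proof (rule ccontr)
    assume "p \<noteq> 3"
    moreover have "p \<noteq> 2" using p n by auto
    moreover have "p \<ge> 2" using prime_ge_2_nat[OF p(1)] .
    ultimately have "odd p" "p \<ge> 2" "p \<noteq> 3" using prime_odd_nat[OF p(1)] by auto
    then have "p \<ge> 5" by presburger
    then show False using few[OF p(2)] card_coprime_shifts_prime[OF p(1), of "N div p"] by simp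
  qed
  show "\<not> 9 dvd gcd N n"
  proof
    assume "9 dvd gcd N n"
    from few[OF this] show False using card_coprime_shifts_nine[of "N div 9"] by simp
  qed
qed

theorem mainTheorem7:
  fixes k :: nat and m N :: int
  assumes "k \<ge> 1" and "N \<ge> 3" and "m \<ge> 1" and "gcd m N = 1"
    and "Qpoly k (exp (2 * of_real pi * \<i> * of_int m / of_int N)) = 0"
  shows "gcd N (4 * int k + 1) \<in> {1, 3}
         \<and> (k mod 3 \<noteq> 2 \<longrightarrow> gcd N (4 * int k + 1) = 1)"
proof -
  obtain N' :: nat where N': "N = int N'" "N' > 0"
    using assms(2) by (metis nonneg_int_cases order_trans zero_le_numeral of_nat_0_less_iff
        less_le_trans zero_less_numeral)
  define z where "z = exp (2 * of_real pi * \<i> * of_int m / of_nat N')"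
  have "coprime m (int N')" using assms(4) N' by (simp add: coprime_iff_gcd_eq_1)
  then have order: "z^t = 1 \<longleftrightarrow> N' dvd t" for t
    unfolding z_def using exp_root_of_unity_order N' by blast
  have "ipoly (Qint (4 * k + 1)) z = 0"
    using assms(5) N' by (simp add: z_def Qpoly_eq_Qint)
  then have G: "gcd N' (4 * k + 1) \<in> {1, 3}"
    using gcd_order_degree[OF order N'(2)] by simp
  have "gcd N (4 * int k + 1) = int (gcd N' (4 * k + 1))"
  proof -
    have "4 * int k + 1 = int (4 * k + 1)" by simp
    then show ?thesis by (simp only: N'(1) gcd_int_int_eq)
  qed
  moreover have "gcd N' (4 * k + 1) \<noteq> 3" if "k mod 3 \<noteq> 2"
  proof
    assume "gcd N' (4 * k + 1) = 3"
    then have "3 dvd 4 * k + 1" by (metis gcd_dvd2)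
    then show False using that by presburger
  qed
  ultimately show ?thesis using G by auto
qed

end
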